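(* A flow $v$ on a connected compact surface $S$ is minimal if and only if $\mathrm{LD}(v)=S$.
   Context: A surface is a two-dimensional paracompact manifold, possibly with boundary. A flow is a continuous $\mathbb{R}$-action $v$ on $S$; it is minimal if $S$ has no nonempty proper closed invariant subsets. A point is singular if fixed by the flow, periodic if non-singular with $v_T(x)=x$ for some $T>0$, closed if singular or periodic. An orbit is locally dense if its closure has nonempty interior; $\mathrm{LD}(v)$ is the union of non-closed locally dense orbits. *)

theory Defs
  imports "HOL-Analysis.Analysis"
begin

definition paracompact_space :: "'a topology \<Rightarrow> bool" where
  "paracompact_space X \<longleftrightarrow>
     (\<forall>\<U>. (\<forall>U\<in>\<U>. openin X U) \<and> topspace X \<subseteq> \<Union>\<U> \<longrightarrow>
        (\<exists>\<V>. (\<forall>V\<in>\<V>. openin X V) \<and> topspace X \<subseteq> \<Union>\<V> \<and>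
             (\<forall>V\<in>\<V>. \<exists>U\<in>\<U>. V \<subseteq> U) \<and>
             (\<forall>x\<in>topspace X. \<exists>W. openin X W \<and> x \<in> W \<and>
                   finite {V\<in>\<V>. V \<inter> W \<noteq> {}})))"

(* closed upper half-plane, the local model of a surface with boundary *)
definition half_plane :: "(real \<times> real) set" where
  "half_plane = {z. snd z \<ge> 0}"

definition surface :: "'a topology \<Rightarrow> bool" where
  "surface S \<longleftrightarrow> Hausdorff_space S \<and> paracompact_space S \<and>
     (\<forall>x\<in>topspace S. \<exists>U V. openin S U \<and> x \<in> U \<and>
         openin (top_of_set half_plane) V \<and>
         (subtopology S U) homeomorphic_space (top_of_set V))"

definition flow :: "(real \<Rightarrow> 'a \<Rightarrow> 'a) \<Rightarrow> 'a topology \<Rightarrow> bool" where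
  "flow v S \<longleftrightarrow> continuous_map (prod_topology euclideanreal S) S (\<lambda>(t, x). v t x) \<and>
     (\<forall>x\<in>topspace S. v 0 x = x) \<and>
     (\<forall>s t. \<forall>x\<in>topspace S. v (s + t) x = v s (v t x))"

definition orbit :: "(real \<Rightarrow> 'a \<Rightarrow> 'a) \<Rightarrow> 'a \<Rightarrow> 'a set" where
  "orbit v x = range (\<lambda>t. v t x)"

definition invariant :: "(real \<Rightarrow> 'a \<Rightarrow> 'a) \<Rightarrow> 'a set \<Rightarrow> bool" where
  "invariant v A \<longleftrightarrow> (\<forall>t. \<forall>x\<in>A. v t x \<in> A)"

definition minimal_flow :: "(real \<Rightarrow> 'a \<Rightarrow> 'a) \<Rightarrow> 'a topology \<Rightarrow> bool" where
  "minimal_flow v S \<longleftrightarrow>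
     \<not> (\<exists>A. A \<noteq> {} \<and> A \<subset> topspace S \<and> closedin S A \<and> invariant v A)"

definition singular_pt :: "(real \<Rightarrow> 'a \<Rightarrow> 'a) \<Rightarrow> 'a \<Rightarrow> bool" where
  "singular_pt v x \<longleftrightarrow> (\<forall>t. v t x = x)"

definition periodic_pt :: "(real \<Rightarrow> 'a \<Rightarrow> 'a) \<Rightarrow> 'a \<Rightarrow> bool" where
  "periodic_pt v x \<longleftrightarrow> \<not> singular_pt v x \<and> (\<exists>T>0. v T x = x)"

definition closed_pt :: "(real \<Rightarrow> 'a \<Rightarrow> 'a) \<Rightarrow> 'a \<Rightarrow> bool" where
  "closed_pt v x \<longleftrightarrow> singular_pt v x \<or> periodic_pt v x"

definition locally_dense_orbit :: "(real \<Rightarrow> 'a \<Rightarrow> 'a) \<Rightarrow> 'a topology \<Rightarrow> 'a \<Rightarrow> bool" where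
  "locally_dense_orbit v S x \<longleftrightarrow> S interior_of (S closure_of orbit v x) \<noteq> {}"

definition LD :: "(real \<Rightarrow> 'a \<Rightarrow> 'a) \<Rightarrow> 'a topology \<Rightarrow> 'a set" where
  "LD v S = \<Union>{orbit v x | x. x \<in> topspace S \<and> \<not> closed_pt v x \<and> locally_dense_orbit v S x}"

end

theory Submission
  imports Defs
begin

text \<open>If \<open>LD v S = topspace S\<close> and \<open>A\<close> were a nonempty proper closed invariant set, then
  by connectedness \<open>A\<close> is not open, so \<open>A - interior A\<close> is a nonempty closed invariant set
  with empty interior; it contains the closure of the orbit of each of its points, so none of
  these orbits is locally dense. Conversely, if the flow is minimal, every orbit closure is the
  whole space, so every orbit is locally dense. A closed orbit is a closed set (a point, or a
  compact image of a period interval), so it would be the whole surface, which would then be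
  a point or a circle; neither contains a planar ball, by invariance of dimension.\<close>

lemma flow_continuous_map_time:
  assumes "flow v S"
  shows "continuous_map S S (v t)"
proof -
  have "continuous_map S S ((\<lambda>(t, x). v t x) \<circ> (\<lambda>x. (t, x)))"
    using assms unfolding flow_def
    by (intro continuous_map_compose[of _ "prod_topology euclideanreal S"] continuous_map_pairedI) auto
  then show ?thesis by (simp add: o_def)
qed

lemma flow_continuous_map_trajectory:
  assumes "flow v S" "x \<in> topspace S"
  shows "continuous_map euclideanreal S (\<lambda>t. v t x)"
proof -
  have "continuous_map euclideanreal S ((\<lambda>(t, x). v t x) \<circ> (\<lambda>t. (t, x)))"
    using assms unfolding flow_def
    by (intro continuous_map_compose[of _ "prod_topology euclideanreal S"] continuous_map_pairedI) auto
  then show ?thesis by (simp add: o_def)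
qed

lemma flow_in_topspace:
  assumes "flow v S" "x \<in> topspace S"
  shows "v t x \<in> topspace S"
  using continuous_map_image_subset_topspace[OF flow_continuous_map_time[OF assms(1)]] assms(2)
  by blast

lemma flow_zero:
  assumes "flow v S" "x \<in> topspace S"
  shows "v 0 x = x"
  using assms unfolding flow_def by blast

lemma flow_add:
  assumes "flow v S" "x \<in> topspace S"
  shows "v (s + t) x = v s (v t x)"
  using assms unfolding flow_def by blast

lemma flow_minus_cancel:
  assumes "flow v S" "x \<in> topspace S"
  shows "v (- t) (v t x) = x"
  using flow_add[OF assms, of "- t" t] flow_zero[OF assms] by simp

lemma invariant_topspace:
  assumes "flow v S"
  shows "invariant v (topspace S)"
  using flow_in_topspace[OF assms] unfolding invariant_def by blast

lemma invariant_Diff: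
  assumes "flow v S" "invariant v A" "invariant v B" "A \<subseteq> topspace S"
  shows "invariant v (A - B)"
  unfolding invariant_def
proof (intro allI ballI)
  fix t z assume z: "z \<in> A - B"
  have "v t z \<notin> B"
  proof
    assume "v t z \<in> B"
    then have "v (- t) (v t z) \<in> B" using assms(3) unfolding invariant_def by blast
    then show False using z assms(4) flow_minus_cancel[OF assms(1)] by auto
  qed
  then show "v t z \<in> A - B" using z assms(2) unfolding invariant_def by blast
qed

lemma invariant_closure_of:
  assumes "flow v S" "invariant v A"
  shows "invariant v (S closure_of A)"
  unfolding invariant_def
proof (intro allI ballI)
  fix t y assume "y \<in> S closure_of A"
  then have "v t y \<in> S closure_of (v t ` A)"
    using continuous_map_image_closure_subset[OF flow_continuous_map_time[OF assms(1)]] by blast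
  moreover have "v t ` A \<subseteq> A" using assms(2) unfolding invariant_def by blast
  ultimately show "v t y \<in> S closure_of A" using closure_of_mono by blast
qed

lemma invariant_interior_of:
  assumes "flow v S" "invariant v A"
  shows "invariant v (S interior_of A)"
  unfolding interior_of_closure_of using assms
  by (intro invariant_Diff invariant_closure_of invariant_topspace) auto

lemma orbit_subset_topspace:
  assumes "flow v S" "x \<in> topspace S"
  shows "orbit v x \<subseteq> topspace S"
  unfolding orbit_def using flow_in_topspace[OF assms] by blast

lemma mem_orbit_self:
  assumes "flow v S" "x \<in> topspace S"
  shows "x \<in> orbit v x"
  unfolding orbit_def using flow_zero[OF assms] by (metis rangeI)

lemma invariant_orbit:
  assumes "flow v S" "x \<in> topspace S"
  shows "invariant v (orbit v x)"
  unfolding invariant_def orbit_def using flow_add[OF assms, symmetric] by blast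

lemma orbit_subset_invariant:
  assumes "invariant v A" "x \<in> A"
  shows "orbit v x \<subseteq> A"
  using assms unfolding invariant_def orbit_def by blast

lemma orbit_eq_if_mem_orbit:
  assumes "flow v S" "x \<in> topspace S" "y \<in> orbit v x"
  shows "orbit v y = orbit v x"
proof
  show "orbit v y \<subseteq> orbit v x"
    using orbit_subset_invariant[OF invariant_orbit[OF assms(1,2)] assms(3)] .
  obtain s where s: "y = v s x" using assms(3) unfolding orbit_def by blast
  have "v t x = v (t - s) y" for t using flow_add[OF assms(1,2), of "t - s" s] s by simp
  then show "orbit v x \<subseteq> orbit v y" unfolding orbit_def by auto
qed

lemma locally_dense_orbit_if_mem_LD:
  assumes "flow v S" "y \<in> LD v S"
  shows "locally_dense_orbit v S y"
proof -
  obtain x where x: "x \<in> topspace S" "y \<in> orbit v x" "locally_dense_orbit v S x"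
    using assms(2) unfolding LD_def by blast
  show ?thesis
    using x(3) unfolding locally_dense_orbit_def orbit_eq_if_mem_orbit[OF assms(1) x(1,2)] .
qed

lemma minimal_flow_if_LD_eq_topspace:
  assumes "connected_space S" "flow v S" "LD v S = topspace S"
  shows "minimal_flow v S"
  unfolding minimal_flow_def
proof
  assume "\<exists>A. A \<noteq> {} \<and> A \<subset> topspace S \<and> closedin S A \<and> invariant v A"
  then obtain A where A: "A \<noteq> {}" "A \<subset> topspace S" "closedin S A" "invariant v A" by auto
  define B where "B = A - S interior_of A"
  have "\<not> openin S A" using assms(1) A unfolding connected_space_clopen_in by auto
  then obtain y where y: "y \<in> B"
    unfolding B_def by (metis Diff_eq_empty_iff interior_of_eq interior_of_subset subset_antisym ex_in_conv)
  have "invariant v B"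
    unfolding B_def using assms(2) A by (intro invariant_Diff invariant_interior_of) auto
  moreover have "closedin S B" unfolding B_def using A(3) by (simp add: closedin_diff)
  ultimately have "S closure_of orbit v y \<subseteq> B"
    using y by (intro closure_of_minimal orbit_subset_invariant)
  moreover have "S interior_of B = {}"
    using interior_of_mono[of B A S] interior_of_subset[of S B] unfolding B_def by blast
  ultimately have "\<not> locally_dense_orbit v S y"
    unfolding locally_dense_orbit_def using interior_of_mono by blast
  moreover have "y \<in> LD v S" using y A(2) assms(3) unfolding B_def by auto
  ultimately show False using locally_dense_orbit_if_mem_LD[OF assms(2)] by blast
qed

lemma flow_period_multiple:
  assumes "flow v S" "x \<in> topspace S" "v T x = x"
  shows "v (of_int k * T) x = x"
proof (induction k rule: int_induct[where k = 0])
  case base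
  show ?case using flow_zero[OF assms(1,2)] by simp
next
  case (step1 i)
  have "v (of_int (i + 1) * T) x = v T (v (of_int i * T) x)"
    using flow_add[OF assms(1,2), of T "of_int i * T"] by (simp add: algebra_simps)
  then show ?case using step1 assms(3) by simp
next
  case (step2 i)
  have "v (of_int (i - 1) * T) x = v (- T) (v (of_int i * T) x)"
    using flow_add[OF assms(1,2), of "- T" "of_int i * T"] by (simp add: algebra_simps)
  then show ?case using step2 flow_minus_cancel[OF assms(1,2), of T] assms(3) by simp
qed

lemma flow_period_reduce:
  assumes "flow v S" "x \<in> topspace S" "v T x = x" "T > 0"
  obtains s' where "0 \<le> s'" "s' < T" "v s x = v s' x"
proof
  define k where "k = \<lfloor>s / T\<rfloor>"
  have "of_int k \<le> s / T" "s / T < of_int k + 1" unfolding k_def by linarith+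
  then show "0 \<le> s - of_int k * T" "s - of_int k * T < T"
    using assms(4) by (simp_all add: field_simps)
  show "v s x = v (s - of_int k * T) x"
    using flow_add[OF assms(1,2), of "s - of_int k * T" "of_int k * T"]
      flow_period_multiple[OF assms(1-3)] by simp
qed

lemma closed_periods:
  assumes "Hausdorff_space S" "flow v S" "x \<in> topspace S"
  shows "closed {t. v t x = x}"
proof -
  have "closedin euclideanreal {t \<in> topspace euclideanreal. v t x \<in> {x}}"
    using assms by (intro closedin_continuous_map_preimage flow_continuous_map_trajectory
        closedin_Hausdorff_singleton)
  then show ?thesis by simp
qed

text \<open>The periods of a point form a closed subgroup of the reals; one that contains arbitrarily
  small positive elements is dense, hence everything.\<close>
lemma singular_pt_if_small_periods:
  assumes "Hausdorff_space S" "flow v S" "x \<in> topspace S"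
    and small: "\<And>e. e > 0 \<Longrightarrow> \<exists>t. 0 < t \<and> t < e \<and> v t x = x"
  shows "singular_pt v x"
  unfolding singular_pt_def
proof
  fix s
  have "\<exists>r\<in>{t. v t x = x}. dist r s < e" if "e > 0" for e
  proof -
    obtain t where t: "0 < t" "t < e" "v t x = x" using small[OF \<open>e > 0\<close>] by blast
    define k where "k = \<lfloor>s / t\<rfloor>"
    have "of_int k \<le> s / t" "s / t < of_int k + 1" unfolding k_def by linarith+
    then have "of_int k * t \<le> s" "s < of_int k * t + t" using t(1) by (simp_all add: field_simps)
    then have "dist (of_int k * t) s < e" using t(2) by (simp add: dist_real_def)
    then show ?thesis using flow_period_multiple[OF assms(2,3) t(3)] by blast
  qed
  then show "v s x = x" using closed_approachable[OF closed_periods[OF assms(1-3)]] by blast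
qed

lemma periodic_pt_least_period:
  assumes "Hausdorff_space S" "flow v S" "x \<in> topspace S" "periodic_pt v x"
  obtains T where "T > 0" "v T x = x" "\<And>t. 0 < t \<Longrightarrow> t < T \<Longrightarrow> v t x \<noteq> x"
proof -
  define Q where "Q = {t. v t x = x} \<inter> {0<..}"
  have Q: "Q \<noteq> {}" "bdd_below Q" using assms(4) unfolding Q_def periodic_pt_def by auto
  have "Inf Q \<in> closure Q" by (rule closure_contains_Inf[OF Q])
  also have "\<dots> \<subseteq> {t. v t x = x}"
    unfolding Q_def using closed_periods[OF assms(1-3)] by (simp add: closure_minimal)
  finally have period: "v (Inf Q) x = x" by simp
  have least: "v t x \<noteq> x" if "0 < t" "t < Inf Q" for t
    using that cInf_lower[OF _ Q(2), of t] unfolding Q_def by force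
  have "Inf Q > 0"
  proof (rule ccontr)
    assume "\<not> Inf Q > 0"
    then have "\<exists>t. 0 < t \<and> t < e \<and> v t x = x" if "e > 0" for e
      using that cInf_less_iff[OF Q, of e] unfolding Q_def by force
    then show False
      using singular_pt_if_small_periods[OF assms(1-3)] assms(4) unfolding periodic_pt_def by blast
  qed
  then show ?thesis using that period least by blast
qed

lemma inj_on_trajectory_within_period:
  assumes "flow v S" "x \<in> topspace S" "\<And>t. 0 < t \<Longrightarrow> t < T \<Longrightarrow> v t x \<noteq> x" "b - a < T"
  shows "inj_on (\<lambda>t. v t x) {a..b}"
proof (rule linorder_inj_onI')
  fix s t assume st: "s \<in> {a..b}" "t \<in> {a..b}" "s < t"
  have "v (t - s) x = v (- s) (v t x)" using flow_add[OF assms(1,2), of "- s" t] by simp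
  moreover have "v (t - s) x \<noteq> x" using st assms(3,4) by auto
  ultimately show "v s x \<noteq> v t x" using flow_minus_cancel[OF assms(1,2), of s] by auto
qed

lemma closedin_orbit_if_closed_pt:
  assumes "Hausdorff_space S" "flow v S" "x \<in> topspace S" "closed_pt v x"
  shows "closedin S (orbit v x)"
proof (cases "singular_pt v x")
  case True
  then have "orbit v x = {x}" unfolding orbit_def singular_pt_def by auto
  then show ?thesis using closedin_Hausdorff_singleton[OF assms(1,3)] by simp
next
  case False
  then obtain T where T: "T > 0" "v T x = x"
    using assms(4) unfolding closed_pt_def periodic_pt_def by auto
  have "orbit v x \<subseteq> (\<lambda>t. v t x) ` {0..T}"
  proof
    fix y assume "y \<in> orbit v x"
    then obtain s where "y = v s x" unfolding orbit_def by blast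
    moreover obtain s' where "0 \<le> s'" "s' < T" "v s x = v s' x"
      using flow_period_reduce[OF assms(2,3) T(2,1)] .
    ultimately show "y \<in> (\<lambda>t. v t x) ` {0..T}" by auto
  qed
  then have "orbit v x = (\<lambda>t. v t x) ` {0..T}" unfolding orbit_def by auto
  moreover have "compactin S ((\<lambda>t. v t x) ` {0..T})"
    by (rule image_compactin[OF _ flow_continuous_map_trajectory[OF assms(2,3)]]) simp
  ultimately show ?thesis using compactin_imp_closedin[OF assms(1)] by simp
qed


lemma half_plane_open_contains_ball:
  assumes "openin (top_of_set half_plane) V" "z \<in> V"
  obtains c r where "r > 0" "ball c r \<subseteq> V"
proof -
  obtain U where U: "open U" "V = half_plane \<inter> U" using assms(1) unfolding openin_open by auto
  obtain e where e: "e > 0" "ball z e \<subseteq> U" using U assms(2) unfolding open_contains_ball by auto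
  have "snd z \<ge> 0" using assms(2) U(2) unfolding half_plane_def by auto
  define c where "c = (fst z, snd z + e / 2)"
  have "ball c (e / 2) \<subseteq> V"
  proof
    fix y assume y: "y \<in> ball c (e / 2)"
    have "dist z c = e / 2" unfolding c_def using e(1) by (cases z) (simp add: dist_Pair_Pair dist_real_def)
    then have "y \<in> U" using y dist_triangle[of z y c] e(2) by (auto simp: dist_commute)
    moreover have "snd y \<ge> 0"
      using y dist_snd_le[of c y] \<open>snd z \<ge> 0\<close> unfolding c_def by (simp add: dist_real_def abs_less_iff)
    ultimately show "y \<in> V" using U(2) unfolding half_plane_def by auto
  qed
  then show ?thesis using that e(1) half_gt_zero by blast
qed

lemma surface_open_contains_ball_image:
  assumes "surface S" "openin S W" "x \<in> W"
  obtains c :: "real \<times> real" and r g where "r > 0" "continuous_map (top_of_set (ball c r)) S g"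
    "g ` ball c r \<subseteq> W" "inj_on g (ball c r)"
proof -
  have "x \<in> topspace S" using assms(2,3) openin_subset by blast
  then obtain U V f g where U: "openin S U" "x \<in> U" "openin (top_of_set half_plane) V"
      and fg: "homeomorphic_maps (subtopology S U) (top_of_set V) f g"
    using assms(1) unfolding surface_def homeomorphic_space_def by blast
  then have cf: "continuous_map (subtopology S U) (top_of_set V) f"
    and cg: "continuous_map (top_of_set V) (subtopology S U) g"
    and gf: "\<And>y. y \<in> topspace S \<inter> U \<Longrightarrow> g (f y) = y"
    and fg: "\<And>z. z \<in> V \<Longrightarrow> f (g z) = z"
    unfolding homeomorphic_maps_def by auto
  define V' where "V' = {z \<in> topspace (top_of_set V). g z \<in> W \<inter> U}"
  have "openin (subtopology S U) (W \<inter> U)" unfolding openin_subtopology using assms(2) by auto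
  then have "openin (top_of_set V) V'"
    unfolding V'_def by (rule openin_continuous_map_preimage[OF cg])
  then have "openin (top_of_set half_plane) V'" using U(3) by (rule openin_trans)
  moreover have "f x \<in> V'"
    using continuous_map_image_subset_topspace[OF cf] gf[of x] \<open>x \<in> topspace S\<close> assms(3) U(2)
    unfolding V'_def by auto
  ultimately obtain c r where cr: "r > 0" "ball c r \<subseteq> V'" by (rule half_plane_open_contains_ball)
  then have "ball c r \<subseteq> V" unfolding V'_def by auto
  then have "continuous_map (top_of_set (ball c r)) S g"
    using continuous_map_from_subtopology[OF cg, of "ball c r"]
    by (simp add: subtopology_subtopology Int_absorb1 continuous_map_in_subtopology)
  moreover have "g ` ball c r \<subseteq> W" using cr(2) unfolding V'_def by auto
  moreover have "inj_on g (ball c r)"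
    using fg \<open>ball c r \<subseteq> V\<close> by (metis inj_on_inverseI subsetD)
  ultimately show ?thesis using that cr(1) by blast
qed

lemma surface_open_not_inj_real:
  assumes "surface S" "openin S W" "W \<noteq> {}"
    and "continuous_map (subtopology S W) euclideanreal h" "inj_on h W"
  shows False
proof -
  obtain x where "x \<in> W" using assms(3) by blast
  then obtain c :: "real \<times> real" and r g where g: "r > 0"
      "continuous_map (top_of_set (ball c r)) S g" "g ` ball c r \<subseteq> W" "inj_on g (ball c r)"
    using surface_open_contains_ball_image[OF assms(1,2)] by metis
  have "continuous_map (top_of_set (ball c r)) (subtopology S W) g"
    using g(2,3) unfolding continuous_map_in_subtopology by auto
  then have "continuous_map (top_of_set (ball c r)) euclideanreal (h \<circ> g)"
    using assms(4) by (rule continuous_map_compose)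
  then have "continuous_on (ball c r) (h \<circ> g)" by simp
  moreover have "inj_on (h \<circ> g) (ball c r)"
    using g(3,4) assms(5) by (simp add: comp_inj_on inj_on_subset)
  moreover have "ball c r \<noteq> {}" using g(1) by simp
  ultimately have "DIM(real \<times> real) \<le> DIM(real)"
    by (rule invariance_of_dimension[OF _ open_ball])
  then show False by simp
qed

lemma surface_open_not_subset_arc:
  assumes "surface S" "openin S W" "W \<noteq> {}"
    and "compact J" "continuous_map euclideanreal S p" "inj_on p J" "W \<subseteq> p ` J"
  shows False
proof -
  have "Hausdorff_space S" using assms(1) unfolding surface_def by blast
  then have "homeomorphic_map (top_of_set J) (subtopology S (p ` J)) p"
    using assms(4-6) continuous_map_image_subset_topspace[OF assms(5)]
    by (intro continuous_imp_homeomorphic_map)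
      (auto simp: continuous_map_in_subtopology continuous_map_from_subtopology
        Hausdorff_space_subtopology compact_space_subtopology)
  then obtain q where "homeomorphic_maps (top_of_set J) (subtopology S (p ` J)) p q"
    unfolding homeomorphic_map_maps by blast
  then have cq: "continuous_map (subtopology S (p ` J)) (top_of_set J) q"
    and pq: "\<And>y. y \<in> p ` J \<Longrightarrow> p (q y) = y"
    using continuous_map_image_subset_topspace[OF assms(5)] unfolding homeomorphic_maps_def by auto
  have "continuous_map (subtopology S W) euclideanreal q"
    using continuous_map_from_subtopology[OF continuous_map_into_fulltopology[OF cq], of W] assms(7)
    by (simp add: subtopology_subtopology Int_absorb1)
  moreover have "inj_on q W" using pq assms(7) by (metis inj_on_inverseI subsetD)
  ultimately show False using surface_open_not_inj_real[OF assms(1-3)] by blast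
qed

lemma surface_closed_orbit_ne_topspace:
  assumes "surface S" "flow v S" "x \<in> topspace S" "closed_pt v x"
  shows "orbit v x \<noteq> topspace S"
proof
  assume orbit: "orbit v x = topspace S"
  have H: "Hausdorff_space S" using assms(1) unfolding surface_def by blast
  define p where "p = (\<lambda>t. v t x)"
  have cp: "continuous_map euclideanreal S p"
    unfolding p_def using flow_continuous_map_trajectory[OF assms(2,3)] .
  show False
  proof (cases "singular_pt v x")
    case True
    then have "topspace S \<subseteq> p ` {0}" using orbit unfolding orbit_def singular_pt_def p_def by auto
    moreover have "topspace S \<noteq> {}" using assms(3) by blast
    ultimately show False
      using surface_open_not_subset_arc[OF assms(1) openin_topspace _ _ cp, of "{0}"] by simp
  next
    case False
    then obtain T where T: "T > 0" "v T x = x" "\<And>t. 0 < t \<Longrightarrow> t < T \<Longrightarrow> v t x \<noteq> x"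
      using periodic_pt_least_period[OF H assms(2,3)] assms(4) unfolding closed_pt_def by blast
    have inj: "inj_on p {a..b}" if "b - a < T" for a b
      unfolding p_def using inj_on_trajectory_within_period[OF assms(2,3) T(3) that] .
    txt \<open>The orbit is a circle: the complement of the arc \<open>p ` {T/2..T}\<close> is open and lies
      in the arc \<open>p ` {0..T/2}\<close>.\<close>
    define W where "W = topspace S - p ` {T/2..T}"
    have "openin S W"
      unfolding W_def using compactin_imp_closedin[OF H image_compactin[OF _ cp]] by auto
    moreover have "p (T/4) \<in> W"
    proof -
      have "inj_on p {T/4..T}" using T(1) by (intro inj) simp
      then have "p (T/4) \<notin> p ` {T/2..T}" using T(1) by (subst inj_on_image_mem_iff) auto
      then show ?thesis unfolding W_def p_def using flow_in_topspace[OF assms(2,3)] by blast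
    qed
    moreover have "W \<subseteq> p ` {0..T/2}"
    proof
      fix y assume y: "y \<in> W"
      then obtain s where "y = p s" using orbit unfolding W_def orbit_def p_def by auto
      moreover obtain s' where "0 \<le> s'" "s' < T" "p s = p s'"
        using flow_period_reduce[OF assms(2,3) T(2,1)] unfolding p_def .
      ultimately show "y \<in> p ` {0..T/2}" using y unfolding W_def by force
    qed
    ultimately show False
      using surface_open_not_subset_arc[OF assms(1) _ _ _ cp inj, of W 0 "T/2"] T(1) by auto
  qed
qed

lemma minimal_flowD:
  assumes "minimal_flow v S" "A \<noteq> {}" "closedin S A" "invariant v A"
  shows "A = topspace S"
  using assms closedin_subset unfolding minimal_flow_def by blast

lemma LD_eq_topspace_if_minimal_flow:
  assumes "surface S" "flow v S" "minimal_flow v S"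
  shows "LD v S = topspace S"
proof
  show "LD v S \<subseteq> topspace S" unfolding LD_def using orbit_subset_topspace[OF assms(2)] by blast
  show "topspace S \<subseteq> LD v S"
  proof
    fix x assume x: "x \<in> topspace S"
    have "S closure_of orbit v x = topspace S"
      using mem_orbit_self[OF assms(2) x] closure_of_subset[OF orbit_subset_topspace[OF assms(2) x]]
      by (intro minimal_flowD[OF assms(3)] closedin_closure_of
          invariant_closure_of[OF assms(2) invariant_orbit[OF assms(2) x]]) auto
    then have "locally_dense_orbit v S x" unfolding locally_dense_orbit_def using x by auto
    moreover have "\<not> closed_pt v x"
    proof
      assume closed: "closed_pt v x"
      have "Hausdorff_space S" using assms(1) unfolding surface_def by blast
      then have "orbit v x = topspace S"
        using mem_orbit_self[OF assms(2) x] closedin_orbit_if_closed_pt[OF _ assms(2) x closed]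
        by (intro minimal_flowD[OF assms(3)] invariant_orbit[OF assms(2) x]) auto
      then show False using surface_closed_orbit_ne_topspace[OF assms(1,2) x closed] by blast
    qed
    ultimately show "x \<in> LD v S" unfolding LD_def using x mem_orbit_self[OF assms(2) x] by blast
  qed
qed

theorem lemma4p1:
  fixes S :: "'a topology" and v :: "real \<Rightarrow> 'a \<Rightarrow> 'a"
  assumes "surface S" and "connected_space S" and "compact_space S" and "flow v S"
  shows "minimal_flow v S \<longleftrightarrow> LD v S = topspace S"
  using LD_eq_topspace_if_minimal_flow[OF assms(1,4)] minimal_flow_if_LD_eq_topspace[OF assms(2,4)]
  by blast

end
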